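(* For $\vec r\in\mathbb{R}^3$ with $|\vec r|\le1$ let $\rho(\vec r)=\tfrac12(I+\vec r\cdot\vec\sigma)$. Let $\vec r_1,\vec r_2$ be in the closed unit ball and linearly dependent (so $\rho(\vec r_1),\rho(\vec r_2)$ commute), and set $m=\max\{|\vec r_1|,|\vec r_2|\}$. Then for every $p\ge1$ $$D^p_{\mathrm{symm},p}(\rho(\vec r_1),\rho(\vec r_2))=2^p\Big(1+\tfrac12|\vec r_1-\vec r_2|-\sqrt{\big(1+\tfrac{\vec r_1\cdot\vec r_2}{m}\big)(1-m)}\Big),$$ with the convention that $\tfrac{\vec r_1\cdot\vec r_2}{m}=0$ when $m=0$.
   Context: Qubit setting: $\mathcal{H}=\mathbb{C}^2$, $\mathcal{H}^*$ is identified with $\mathbb{C}^2$ via the dual basis, and $A^T$ is the usual matrix transpose; operators on $\mathcal{H}\otimes\mathcal{H}^*$ are $4\times4$ matrices in the basis $e_1\otimes e_1^*,e_1\otimes e_2^*,e_2\otimes e_1^*,e_2\otimes e_2^*$. Pauli matrices: $\sigma_1=\sigma_x=\begin{pmatrix}0&1\\1&0\end{pmatrix}$, $\sigma_2=\sigma_y=\begin{pmatrix}0&-i\\i&0\end{pmatrix}$, $\sigma_3=\sigma_z=\begin{pmatrix}1&0\\0&-1\end{pmatrix}$, and $\vec\sigma=(\sigma_1,\sigma_2,\sigma_3)$. The set of couplings of states $\rho,\omega$ is $\mathcal{C}(\rho,\omega)=\{\Pi\in\mathcal{S}(\mathcal{H}\otimes\mathcal{H}^* ):\mathrm{tr}_{\mathcal{H}^*}[\Pi]=\omega,\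 \mathrm{tr}_{\mathcal{H}}[\Pi]=\rho^T\}$. For $p\ge1$, $C_{\mathrm{symm},p}=\sum_{k=1}^3|\sigma_k\otimes I^T-I\otimes\sigma_k^T|^p$, which equals the matrix $\begin{pmatrix}2^p&0&0&-2^p\\0&2^{p+1}&0&0\\0&0&2^{p+1}&0\\-2^p&0&0&2^p\end{pmatrix}$, and $D_{\mathrm{symm},p}(\rho,\omega)=\big(\min_{\Pi\in\mathcal{C}(\rho,\omega)}\mathrm{tr}[\Pi C_{\mathrm{symm},p}]\big)^{1/p}$. *)

theory Defs
  imports "HOL-Analysis.Analysis"
begin

text \<open>Qubit operators are complex 2x2 matrices indexed by the type 2.
  Operators on H (x) H^* are indexed by pairs (i,j) :: 2 x 2, where (i,j)
  stands for the basis vector e_i (x) e_j^*; the lexicographic order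
  (1,1),(1,2),(2,1),(2,2) is the basis order of the paper.\<close>

definition sigma1 :: "complex^2^2" where
  "sigma1 = (\<chi> i j. if i \<noteq> j then 1 else 0)"

definition sigma2 :: "complex^2^2" where
  "sigma2 = (\<chi> i j. if i = 1 \<and> j = 2 then - \<i> else if i = 2 \<and> j = 1 then \<i> else 0)"

definition sigma3 :: "complex^2^2" where
  "sigma3 = (\<chi> i j. if i = j then (if i = 1 then 1 else -1) else 0)"

definition bloch_state :: "real^3 \<Rightarrow> complex^2^2" where
  "bloch_state r = (1/2) *\<^sub>R (mat 1 + (r$1) *\<^sub>R sigma1 + (r$2) *\<^sub>R sigma2 + (r$3) *\<^sub>R sigma3)"

definition psd :: "complex^'n^'n \<Rightarrow> bool" where
  "psd A \<longleftrightarrow> (\<forall>i j. A$j$i = cnj (A$i$j)) \<and>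
     (\<forall>v::complex^'n. 0 \<le> Re (\<Sum>i\<in>UNIV. \<Sum>j\<in>UNIV. cnj (v$i) * A$i$j * v$j))"

definition is_state :: "complex^'n^'n \<Rightarrow> bool" where
  "is_state A \<longleftrightarrow> psd A \<and> trace A = 1"

definition ptrace_dual :: "complex^('a::finite \<times> 'a)^('a \<times> 'a) \<Rightarrow> complex^'a^'a" where
  "ptrace_dual P = (\<chi> i k. \<Sum>j\<in>UNIV. P$(i,j)$(k,j))"

definition ptrace_H :: "complex^('a::finite \<times> 'a)^('a \<times> 'a) \<Rightarrow> complex^'a^'a" where
  "ptrace_H P = (\<chi> j l. \<Sum>i\<in>UNIV. P$(i,j)$(i,l))"

definition couplings :: "complex^2^2 \<Rightarrow> complex^2^2 \<Rightarrow> (complex^(2\<times>2)^(2\<times>2)) set" where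
  "couplings \<rho> \<omega> = {P. is_state P \<and> ptrace_dual P = \<omega> \<and> ptrace_H P = transpose \<rho>}"

definition C_symm :: "real \<Rightarrow> complex^(2\<times>2)^(2\<times>2)" where
  "C_symm p = (\<chi> a b.
      if a = b then (if a = (1,1) \<or> a = (2,2) then complex_of_real (2 powr p)
                     else complex_of_real (2 powr (p + 1)))
      else if (a = (1,1) \<and> b = (2,2)) \<or> (a = (2,2) \<and> b = (1,1)) then - complex_of_real (2 powr p)
      else 0)"

text \<open>D_symm,p = (min over couplings of tr[Pi C])^(1/p); the minimum is rendered as Inf
  (the trace is real for Hermitian Pi, C, so we take its real part).\<close>
definition D_symm :: "real \<Rightarrow> complex^2^2 \<Rightarrow> complex^2^2 \<Rightarrow> real" where
  "D_symm p \<rho> \<omega> = (Inf {Re (trace (P ** C_symm p)) | P. P \<in> couplings \<rho> \<omega>}) powr (1 / p)"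

end

theory Submission
  imports Defs
begin

(* Linearly dependent Bloch vectors are r1 = s n and r2 = t n for a unit vector n, so both states
   are diagonal in an eigenbasis u, v of n.sigma, with eigenvalues (1 +- s)/2 and (1 +- t)/2.
   The cost matrix is C = 2^p (2 I - |Phi><Phi|) with Phi = sum_i e_i (x) e_i^* = u (x) u^* + v (x) v^*,
   so a coupling Pi costs 2^p (2 - <Phi|Pi|Phi>). The marginal conditions bound the weights w_uu, w_vv
   that Pi puts on u (x) u^* and v (x) v^* by the overlaps a = min((1+s)/2, (1+t)/2) and
   b = min((1-s)/2, (1-t)/2), and positivity of Pi (Cauchy-Schwarz) gives
   <Phi|Pi|Phi> <= w_uu + w_vv + 2 sqrt(w_uu w_vv) <= (sqrt a + sqrt b)^2.
   The bound is attained by |psi><psi| with psi = sqrt a u (x) u^* + sqrt b v (x) v^*, plus the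
   remaining marginal mass placed on u (x) v^* and v (x) u^*. *)

definition cinner :: "complex^'n \<Rightarrow> complex^'n \<Rightarrow> complex" where
  "cinner x y = (\<Sum>i\<in>UNIV. cnj (x$i) * y$i)"

definition sesq :: "complex^'n^'n \<Rightarrow> complex^'n \<Rightarrow> complex^'n \<Rightarrow> complex" where
  "sesq P x y = (\<Sum>i\<in>UNIV. \<Sum>j\<in>UNIV. cnj (x$i) * P$i$j * y$j)"

definition outer :: "complex^'n \<Rightarrow> complex^'n \<Rightarrow> complex^'n^'n" where
  "outer z w = (\<chi> i j. z$i * cnj (w$j))"

lemma cnj_cinner: "cnj (cinner x y) = cinner y x"
  unfolding cinner_def cnj_sum by (intro sum.cong refl) (simp add: mult.commute)

lemma cinner_add_left: "cinner (x + y) z = cinner x z + cinner y z"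
  by (simp add: cinner_def algebra_simps sum.distrib)

lemma cinner_add_right: "cinner x (y + z) = cinner x y + cinner x z"
  by (simp add: cinner_def algebra_simps sum.distrib)

lemma cinner_scaleR_left: "cinner (r *\<^sub>R x) y = of_real r * cinner x y"
  by (simp add: cinner_def sum_distrib_left, simp add: scaleR_conv_of_real mult_ac)

lemma cinner_scaleR_right: "cinner x (r *\<^sub>R y) = of_real r * cinner x y"
  by (simp add: cinner_def sum_distrib_left, simp add: scaleR_conv_of_real mult_ac)

lemma sesq_add_left: "sesq P (x + y) z = sesq P x z + sesq P y z"
  by (simp add: sesq_def algebra_simps sum.distrib)

lemma sesq_add_right: "sesq P x (y + z) = sesq P x y + sesq P x z"
  by (simp add: sesq_def algebra_simps sum.distrib)

lemma sesq_scaleR_left: "sesq P (r *\<^sub>R x) y = of_real r * sesq P x y"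
  by (simp add: sesq_def sum_distrib_left, simp add: scaleR_conv_of_real mult_ac)

lemma sesq_scaleR_right: "sesq P x (r *\<^sub>R y) = of_real r * sesq P x y"
  by (simp add: sesq_def sum_distrib_left, simp add: scaleR_conv_of_real mult_ac)

lemma sesq_add_matrix: "sesq (P + Q) x y = sesq P x y + sesq Q x y"
  by (simp add: sesq_def algebra_simps sum.distrib)

lemma sesq_scaleR_matrix: "sesq (r *\<^sub>R P) x y = of_real r * sesq P x y"
  by (simp add: sesq_def sum_distrib_left, simp add: scaleR_conv_of_real mult_ac)

lemma sesq_outer: "sesq (outer z w) x y = cinner x z * cinner w y"
proof -
  have "sesq (outer z w) x y = (\<Sum>i\<in>UNIV. \<Sum>j\<in>UNIV. (cnj (x$i) * z$i) * (cnj (w$j) * y$j))"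
    by (simp add: sesq_def outer_def mult_ac)
  then show ?thesis by (simp add: cinner_def sum_product)
qed

lemma outer_add_left: "outer (x + y) z = outer x z + outer y z"
  by (simp add: vec_eq_iff outer_def algebra_simps)

lemma outer_add_right: "outer x (y + z) = outer x y + outer x z"
  by (simp add: vec_eq_iff outer_def algebra_simps)

lemma outer_scaleR_left: "outer (r *\<^sub>R x) y = r *\<^sub>R outer x y"
  by (simp add: vec_eq_iff outer_def)

lemma outer_scaleR_right: "outer x (r *\<^sub>R y) = r *\<^sub>R outer x y"
  by (simp add: vec_eq_iff outer_def)

lemma trace_mult_outer: "trace (P ** outer z w) = sesq P w z"
  by (simp add: trace_def matrix_matrix_mult_def outer_def sesq_def sum_distrib_left mult_ac)

lemma trace_outer: "trace (outer x y) = cinner y x"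
  by (simp add: trace_def outer_def cinner_def mult.commute)

lemma trace_scaleR: "trace (r *\<^sub>R A) = of_real r * trace (A :: complex^'n^'n)"
  by (simp add: trace_def sum_distrib_left, simp add: scaleR_conv_of_real)

lemma trace_mult_scaleR_right: "trace (A ** (r *\<^sub>R B)) = of_real r * trace (A ** B :: complex^'n^'n)"
  by (simp add: matrix_scalar_ac scalar_matrix_assoc[symmetric] trace_scaleR)

lemma trace_mult_diff_right: "trace (A ** (B - C)) = trace (A ** B) - trace (A ** C :: complex^'n^'n)"
  by (simp add: trace_def matrix_matrix_mult_def right_diff_distrib sum_subtractf)

lemma outer_add_outer_eq_mat_1D:
  "outer y y + outer z z = mat 1 \<Longrightarrow> y$j * cnj (y$l) + z$j * cnj (z$l) = (if j = l then 1 else 0)"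
  by (drule arg_cong[where f = "\<lambda>M. M$j$l"]) (simp add: outer_def mat_def)

lemma psd_iff_sesq:
  "psd P \<longleftrightarrow> (\<forall>i j. P$j$i = cnj (P$i$j)) \<and> (\<forall>x. 0 \<le> Re (sesq P x x))"
  unfolding psd_def sesq_def ..

lemma psd_sesq_nonneg: "psd P \<Longrightarrow> 0 \<le> Re (sesq P x x)"
  unfolding psd_iff_sesq by blast

lemma psd_hermitian: "psd P \<Longrightarrow> P$j$i = cnj (P$i$j)"
  unfolding psd_iff_sesq by blast

lemma psd_outer_self: "psd (outer z z)"
proof -
  have "0 \<le> Re (sesq (outer z z) x x)" for x
    by (simp add: sesq_outer cnj_cinner[of x z, symmetric] complex_mult_cnj)
  moreover have "outer z z $ j $ i = cnj (outer z z $ i $ j)" for i j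
    by (simp add: outer_def mult.commute)
  ultimately show ?thesis unfolding psd_iff_sesq by blast
qed

lemma psd_add:
  assumes "psd P" and "psd Q"
  shows "psd (P + Q)"
proof -
  have "0 \<le> Re (sesq (P + Q) x x)" for x
    using psd_sesq_nonneg[OF assms(1), of x] psd_sesq_nonneg[OF assms(2), of x]
    by (simp add: sesq_add_matrix)
  moreover have "(P + Q) $ j $ i = cnj ((P + Q) $ i $ j)" for i j
    using psd_hermitian[OF assms(1), of j i] psd_hermitian[OF assms(2), of j i] by simp
  ultimately show ?thesis unfolding psd_iff_sesq by blast
qed

lemma psd_scaleR:
  assumes "psd P" and "0 \<le> r"
  shows "psd (r *\<^sub>R P)"
proof -
  have "0 \<le> Re (sesq (r *\<^sub>R P) x x)" for x
    using psd_sesq_nonneg[OF assms(1), of x] assms(2) by (simp add: sesq_scaleR_matrix)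
  moreover have "(r *\<^sub>R P) $ j $ i = cnj ((r *\<^sub>R P) $ i $ j)" for i j
    using psd_hermitian[OF assms(1), of j i] by simp
  ultimately show ?thesis unfolding psd_iff_sesq by blast
qed

lemma quadratic_nonneg_imp_le_sqrt:
  fixes a b c :: real
  assumes nonneg: "\<And>l. 0 \<le> a + l * c + l^2 * b" and "0 \<le> b"
  shows "c \<le> 2 * sqrt (a * b)"
proof (cases "b = 0")
  case True
  show ?thesis
  proof (rule ccontr)
    assume "\<not> ?thesis"
    then have "c > 0" using True by simp
    have "0 \<le> a + (- (a + 1) / c) * c" using nonneg[of "- (a + 1) / c"] True by simp
    also have "\<dots> = -1" using \<open>c > 0\<close> by (simp add: field_simps)
    finally show False by simp
  qed
next
  case False
  with \<open>0 \<le> b\<close> have "b > 0" by simp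
  have "0 \<le> a + (- c / (2 * b)) * c + (- c / (2 * b))^2 * b" by (rule nonneg)
  also have "\<dots> = a - c^2 / (4 * b)" using \<open>b > 0\<close> by (simp add: field_simps power2_eq_square)
  finally have "c^2 \<le> 4 * a * b" using \<open>b > 0\<close> by (simp add: field_simps)
  then have "sqrt (c^2) \<le> sqrt (4 * a * b)" by (rule real_sqrt_le_mono)
  then show ?thesis by (simp add: real_sqrt_mult)
qed

lemma psd_sesq_cross_le:
  assumes "psd P"
  shows "Re (sesq P x y + sesq P y x) \<le> 2 * sqrt (Re (sesq P x x) * Re (sesq P y y))"
proof (rule quadratic_nonneg_imp_le_sqrt)
  fix l :: real
  have "0 \<le> Re (sesq P (x + l *\<^sub>R y) (x + l *\<^sub>R y))" by (rule psd_sesq_nonneg[OF assms])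
  then show "0 \<le> Re (sesq P x x) + l * Re (sesq P x y + sesq P y x) + l^2 * Re (sesq P y y)"
    by (simp add: sesq_add_left sesq_add_right sesq_scaleR_left sesq_scaleR_right
        algebra_simps power2_eq_square)
qed (rule psd_sesq_nonneg[OF assms])

(* x (x) y^* in coordinates: the dual vector y^* has the conjugate coordinates of y. *)
definition tensor_dual :: "complex^'a \<Rightarrow> complex^'a \<Rightarrow> complex^('a::finite \<times> 'a)" where
  "tensor_dual x y = (\<chi> a. x$(fst a) * cnj (y$(snd a)))"

definition max_entangled :: "complex^('a::finite \<times> 'a)" where
  "max_entangled = (\<chi> a. if fst a = snd a then 1 else 0)"

lemma sum_UNIV_prod: "(\<Sum>a\<in>UNIV. f a) = (\<Sum>i\<in>UNIV. \<Sum>j\<in>UNIV. f (i, j))"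
  unfolding UNIV_Times_UNIV[symmetric] sum.cartesian_product by simp

lemma ptrace_dual_add: "ptrace_dual (A + B) = ptrace_dual A + ptrace_dual B"
  by (simp add: vec_eq_iff ptrace_dual_def sum.distrib)

lemma ptrace_dual_scaleR: "ptrace_dual (r *\<^sub>R A) = r *\<^sub>R ptrace_dual A"
  by (simp add: vec_eq_iff ptrace_dual_def scaleR_sum_right)

lemma ptrace_H_add: "ptrace_H (A + B) = ptrace_H A + ptrace_H B"
  by (simp add: vec_eq_iff ptrace_H_def sum.distrib)

lemma ptrace_H_scaleR: "ptrace_H (r *\<^sub>R A) = r *\<^sub>R ptrace_H A"
  by (simp add: vec_eq_iff ptrace_H_def scaleR_sum_right)

lemma ptrace_dual_outer_tensor:
  "ptrace_dual (outer (tensor_dual x y) (tensor_dual x' y')) = (\<chi> i k. x$i * cnj (x'$k) * cinner y y')"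
  by (simp add: vec_eq_iff ptrace_dual_def outer_def tensor_dual_def cinner_def sum_distrib_left mult_ac)

lemma ptrace_H_outer_tensor:
  "ptrace_H (outer (tensor_dual x y) (tensor_dual x' y')) = (\<chi> j l. cinner x' x * cnj (y$j) * y'$l)"
  by (simp add: vec_eq_iff ptrace_H_def outer_def tensor_dual_def cinner_def
      sum_distrib_left sum_distrib_right mult_ac)

lemma trace_ptrace_dual: "trace (ptrace_dual P) = trace P"
  by (simp add: trace_def ptrace_dual_def sum_UNIV_prod)

lemma sesq_tensor_ptrace_dual:
  assumes "outer y y + outer z z = mat 1"
  shows "sesq P (tensor_dual x y) (tensor_dual x y) + sesq P (tensor_dual x z) (tensor_dual x z)
       = sesq (ptrace_dual P) x x"
proof -
  have "sesq P (tensor_dual x y) (tensor_dual x y) + sesq P (tensor_dual x z) (tensor_dual x z)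
      = (\<Sum>i\<in>UNIV. \<Sum>j\<in>UNIV. \<Sum>k\<in>UNIV. \<Sum>l\<in>UNIV.
           cnj (x$i) * x$k * P$(i,j)$(k,l) * (y$j * cnj (y$l) + z$j * cnj (z$l)))"
    unfolding sesq_def tensor_dual_def sum_UNIV_prod by (simp add: distrib_left sum.distrib mult_ac)
  also have "\<dots> = (\<Sum>i\<in>UNIV. \<Sum>j\<in>UNIV. \<Sum>k\<in>UNIV. cnj (x$i) * x$k * P$(i,j)$(k,j))"
    by (simp add: outer_add_outer_eq_mat_1D[OF assms] if_distrib cong: if_cong)
  also have "\<dots> = (\<Sum>i\<in>UNIV. \<Sum>k\<in>UNIV. \<Sum>j\<in>UNIV. cnj (x$i) * x$k * P$(i,j)$(k,j))"
    by (intro sum.cong refl sum.swap)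
  also have "\<dots> = sesq (ptrace_dual P) x x"
    by (simp add: sesq_def ptrace_dual_def sum_distrib_left sum_distrib_right mult_ac)
  finally show ?thesis .
qed

lemma sesq_tensor_ptrace_H:
  assumes "outer x x + outer z z = mat 1"
  shows "sesq P (tensor_dual x y) (tensor_dual x y) + sesq P (tensor_dual z y) (tensor_dual z y)
       = sesq (transpose (ptrace_H P)) y y"
proof -
  have "sesq P (tensor_dual x y) (tensor_dual x y) + sesq P (tensor_dual z y) (tensor_dual z y)
      = (\<Sum>i\<in>UNIV. \<Sum>j\<in>UNIV. \<Sum>k\<in>UNIV. \<Sum>l\<in>UNIV.
           y$j * cnj (y$l) * P$(i,j)$(k,l) * (x$k * cnj (x$i) + z$k * cnj (z$i)))"
    unfolding sesq_def tensor_dual_def sum_UNIV_prod by (simp add: distrib_left sum.distrib mult_ac)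
  also have "\<dots> = (\<Sum>i\<in>UNIV. \<Sum>j\<in>UNIV. \<Sum>l\<in>UNIV. \<Sum>k\<in>UNIV.
           y$j * cnj (y$l) * P$(i,j)$(k,l) * (x$k * cnj (x$i) + z$k * cnj (z$i)))"
    by (intro sum.cong refl sum.swap)
  also have "\<dots> = (\<Sum>i\<in>UNIV. \<Sum>j\<in>UNIV. \<Sum>l\<in>UNIV. y$j * cnj (y$l) * P$(i,j)$(i,l))"
    by (simp add: outer_add_outer_eq_mat_1D[OF assms] if_distrib cong: if_cong)
  also have "\<dots> = (\<Sum>j\<in>UNIV. \<Sum>l\<in>UNIV. \<Sum>i\<in>UNIV. y$j * cnj (y$l) * P$(i,j)$(i,l))"
    by (subst sum.swap) (intro sum.cong refl sum.swap)
  also have "\<dots> = (\<Sum>l\<in>UNIV. \<Sum>j\<in>UNIV. \<Sum>i\<in>UNIV. y$j * cnj (y$l) * P$(i,j)$(i,l))"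
    by (rule sum.swap)
  also have "\<dots> = sesq (transpose (ptrace_H P)) y y"
    by (simp add: sesq_def transpose_def ptrace_H_def sum_distrib_left sum_distrib_right mult_ac)
  finally show ?thesis .
qed

lemma cinner_max_entangled_tensor: "cinner max_entangled (tensor_dual x y) = cinner y x"
  unfolding cinner_def max_entangled_def tensor_dual_def sum_UNIV_prod
  by (simp add: if_distrib if_distribR mult.commute cong: if_cong)

lemma cinner_tensor_max_entangled: "cinner (tensor_dual x y) max_entangled = cinner x y"
  by (metis cinner_max_entangled_tensor cnj_cinner)

lemma max_entangled_eq_tensor:
  "outer u u + outer v v = mat 1 \<Longrightarrow> max_entangled = tensor_dual u u + tensor_dual v v"
  by (simp add: vec_eq_iff max_entangled_def tensor_dual_def outer_add_outer_eq_mat_1D)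

lemma C_symm_eq_max_entangled:
  "C_symm p = (2 powr p) *\<^sub>R (2 *\<^sub>R mat 1 - outer max_entangled max_entangled)"
proof -
  have "C_symm p $ (i, j) $ (k, l) =
        ((2 powr p) *\<^sub>R (2 *\<^sub>R mat 1 - outer max_entangled max_entangled)) $ (i, j) $ (k, l)"
    for i j k l :: 2
    using exhaust_2[of i] exhaust_2[of j] exhaust_2[of k] exhaust_2[of l]
    unfolding C_symm_def outer_def max_entangled_def mat_def vec_lambda_beta
      vector_scaleR_component vector_minus_component
    by (elim disjE) (simp_all add: powr_add scaleR_conv_of_real)
  then show ?thesis by (simp add: vec_eq_iff)
qed

lemma coupling_cost_eq:
  assumes "trace P = 1"
  shows "Re (trace (P ** C_symm p)) = 2 powr p * (2 - Re (sesq P max_entangled max_entangled))"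
proof -
  have "trace (P ** C_symm p)
      = of_real (2 powr p) * (2 * trace P - sesq P max_entangled max_entangled)"
    by (simp add: C_symm_eq_max_entangled trace_mult_scaleR_right trace_mult_diff_right
        trace_mult_outer)
  then show ?thesis using assms by simp
qed

(* In dimension two completeness follows from orthonormality; it is kept because the marginal
   computations use it directly. *)
definition orthonormal_basis2 :: "complex^2 \<Rightarrow> complex^2 \<Rightarrow> bool" where
  "orthonormal_basis2 u v \<longleftrightarrow>
     cinner u u = 1 \<and> cinner v v = 1 \<and> cinner u v = 0 \<and> outer u u + outer v v = mat 1"

definition diag_state :: "complex^2 \<Rightarrow> complex^2 \<Rightarrow> real \<Rightarrow> complex^2^2" where
  "diag_state u v s = ((1 + s) / 2) *\<^sub>R outer u u + ((1 - s) / 2) *\<^sub>R outer v v"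

lemma sesq_diag_state:
  assumes "orthonormal_basis2 u v"
  shows "sesq (diag_state u v s) u u = of_real ((1 + s) / 2)"
    and "sesq (diag_state u v s) v v = of_real ((1 - s) / 2)"
proof -
  have "cinner v u = 0" using assms cnj_cinner[of u v] by (simp add: orthonormal_basis2_def)
  then show "sesq (diag_state u v s) u u = of_real ((1 + s) / 2)"
    and "sesq (diag_state u v s) v v = of_real ((1 - s) / 2)"
    using assms by (simp_all add: orthonormal_basis2_def diag_state_def sesq_add_matrix
        sesq_scaleR_matrix sesq_outer)
qed

definition min_cost :: "real \<Rightarrow> real \<Rightarrow> real" where
  "min_cost s t = 1 + \<bar>s - t\<bar> / 2 - sqrt ((1 + min s t) * (1 - max s t))"

lemma min_cost_eq_overlaps:
  fixes s t :: real
  defines "a \<equiv> min ((1 + s) / 2) ((1 + t) / 2)" and "b \<equiv> min ((1 - s) / 2) ((1 - t) / 2)"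
  shows "min_cost s t = 2 - a - b - 2 * sqrt (a * b)"
proof -
  have "a + b = 1 - \<bar>s - t\<bar> / 2"
    unfolding a_def b_def by (auto simp: min_def abs_if field_simps)
  moreover have "(1 + min s t) * (1 - max s t) = 4 * (a * b)"
    unfolding a_def b_def by (auto simp: min_def max_def field_simps)
  ultimately show ?thesis
    unfolding min_cost_def by (simp add: real_sqrt_mult)
qed

lemma min_cost_nonneg:
  assumes "\<bar>s\<bar> \<le> 1" and "\<bar>t\<bar> \<le> 1"
  shows "0 \<le> min_cost s t"
proof -
  have "0 \<le> 1 + min s t" and "0 \<le> 1 - max s t" using assms by auto
  then have "sqrt ((1 + min s t) * (1 - max s t)) \<le> ((1 + min s t) + (1 - max s t)) / 2"
    by (rule arith_geo_mean_sqrt)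
  also have "\<dots> \<le> 1" by simp
  also have "\<dots> \<le> 1 + \<bar>s - t\<bar> / 2" by simp
  finally show ?thesis unfolding min_cost_def by simp
qed

lemma coupling_cost_lower_bound:
  assumes onb: "orthonormal_basis2 u v"
    and P: "P \<in> couplings (diag_state u v s) (diag_state u v t)"
  shows "2 powr p * min_cost s t \<le> Re (trace (P ** C_symm p))"
proof -
  define a where "a = min ((1 + s) / 2) ((1 + t) / 2)"
  define b where "b = min ((1 - s) / 2) ((1 - t) / 2)"
  have psd: "psd P" and tr: "trace P = 1"
    and marg_dual: "ptrace_dual P = diag_state u v t"
    and marg_H: "transpose (ptrace_H P) = diag_state u v s"
    using P by (auto simp: couplings_def is_state_def)
  have cmp: "outer u u + outer v v = mat 1"
    using onb by (simp add: orthonormal_basis2_def)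
  define w where "w = (\<lambda>x y. Re (sesq P (tensor_dual x y) (tensor_dual x y)))"
  have w_nonneg: "0 \<le> w x y" for x y
    unfolding w_def by (rule psd_sesq_nonneg[OF psd])
  have "w u u + w u v = (1 + t) / 2" and "w v u + w v v = (1 - t) / 2"
    using arg_cong[OF sesq_tensor_ptrace_dual[OF cmp, of P u], of Re]
      arg_cong[OF sesq_tensor_ptrace_dual[OF cmp, of P v], of Re]
    by (simp_all add: w_def marg_dual sesq_diag_state[OF onb])
  moreover have "w u u + w v u = (1 + s) / 2" and "w u v + w v v = (1 - s) / 2"
    using arg_cong[OF sesq_tensor_ptrace_H[OF cmp, of P u], of Re]
      arg_cong[OF sesq_tensor_ptrace_H[OF cmp, of P v], of Re]
    by (simp_all add: w_def marg_H sesq_diag_state[OF onb])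
  ultimately have "w u u \<le> a" "w v v \<le> b"
    using w_nonneg[of u v] w_nonneg[of v u] unfolding a_def b_def by (auto simp: min_def)
  moreover from this have "sqrt (w u u * w v v) \<le> sqrt (a * b)"
    using w_nonneg[of u u] w_nonneg[of v v] by (intro real_sqrt_le_mono mult_mono) auto
  ultimately have "w u u + w v v + 2 * sqrt (w u u * w v v) \<le> a + b + 2 * sqrt (a * b)"
    by linarith
  moreover have "Re (sesq P max_entangled max_entangled) \<le> w u u + w v v + 2 * sqrt (w u u * w v v)"
    using psd_sesq_cross_le[OF psd, of "tensor_dual u u" "tensor_dual v v"]
    unfolding max_entangled_eq_tensor[OF cmp] w_def
    by (simp add: sesq_add_left sesq_add_right)
  ultimately have "Re (sesq P max_entangled max_entangled) \<le> a + b + 2 * sqrt (a * b)"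
    by linarith
  then show ?thesis
    unfolding coupling_cost_eq[OF tr] min_cost_eq_overlaps a_def[symmetric] b_def[symmetric]
    by (intro mult_left_mono) auto
qed

lemma min_cost_attained:
  assumes onb: "orthonormal_basis2 u v" and "\<bar>s\<bar> \<le> 1" and "\<bar>t\<bar> \<le> 1"
  obtains P where "P \<in> couplings (diag_state u v s) (diag_state u v t)"
    and "Re (trace (P ** C_symm p)) = 2 powr p * min_cost s t"
proof -
  define a where "a = min ((1 + s) / 2) ((1 + t) / 2)"
  define b where "b = min ((1 - s) / 2) ((1 - t) / 2)"
  have uu: "cinner u u = 1" and vv: "cinner v v = 1" and uv: "cinner u v = 0"
    and cmp: "outer u u + outer v v = mat 1"
    using onb by (simp_all add: orthonormal_basis2_def)
  have vu: "cinner v u = 0" using uv cnj_cinner[of u v] by simp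
  have "0 \<le> a" "0 \<le> b"
    using assms(2,3) unfolding a_def b_def by auto
  define \<alpha> where "\<alpha> = (1 + t) / 2 - a"
  define \<beta> where "\<beta> = (1 - t) / 2 - b"
  have "0 \<le> \<alpha>" "0 \<le> \<beta>" and weights: "(1 - s) / 2 = b + \<alpha>" "(1 + s) / 2 = a + \<beta>"
    using assms(2,3) unfolding \<alpha>_def \<beta>_def a_def b_def by (auto simp: min_def field_simps)
  define \<psi> where "\<psi> = sqrt a *\<^sub>R tensor_dual u u + sqrt b *\<^sub>R tensor_dual v v"
  define P where "P = outer \<psi> \<psi>
    + \<alpha> *\<^sub>R outer (tensor_dual u v) (tensor_dual u v)
    + \<beta> *\<^sub>R outer (tensor_dual v u) (tensor_dual v u)"
  have psd: "psd P"
    unfolding P_def using \<open>0 \<le> \<alpha>\<close> \<open>0 \<le> \<beta>\<close>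
    by (intro psd_add psd_scaleR psd_outer_self)
  have outer_\<psi>: "outer \<psi> \<psi> = a *\<^sub>R outer (tensor_dual u u) (tensor_dual u u)
      + (sqrt a * sqrt b) *\<^sub>R outer (tensor_dual u u) (tensor_dual v v)
      + (sqrt a * sqrt b) *\<^sub>R outer (tensor_dual v v) (tensor_dual u u)
      + b *\<^sub>R outer (tensor_dual v v) (tensor_dual v v)"
    unfolding \<psi>_def using \<open>0 \<le> a\<close> \<open>0 \<le> b\<close>
    by (simp add: outer_add_left outer_add_right outer_scaleR_left outer_scaleR_right algebra_simps)
  have marg_dual: "ptrace_dual P = diag_state u v t"
    unfolding P_def outer_\<psi> ptrace_dual_add ptrace_dual_scaleR ptrace_dual_outer_tensor uu vv uv vu
    by (simp add: vec_eq_iff diag_state_def outer_def \<alpha>_def \<beta>_def algebra_simps)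
  have marg_H: "ptrace_H P = transpose (diag_state u v s)"
    unfolding P_def outer_\<psi> ptrace_H_add ptrace_H_scaleR ptrace_H_outer_tensor uu vv uv vu
      diag_state_def weights
    by (simp add: vec_eq_iff outer_def transpose_def algebra_simps)
  have tr: "trace P = 1"
    unfolding trace_ptrace_dual[symmetric] marg_dual diag_state_def
    by (simp add: trace_add trace_scaleR trace_outer uu vv, simp add: field_simps)
  have "cinner max_entangled \<psi> = of_real (sqrt a + sqrt b)"
    and "cinner \<psi> max_entangled = of_real (sqrt a + sqrt b)"
    unfolding \<psi>_def
    by (simp_all add: cinner_add_left cinner_add_right cinner_scaleR_left cinner_scaleR_right
        cinner_max_entangled_tensor cinner_tensor_max_entangled uu vv)
  then have "sesq P max_entangled max_entangled = of_real ((sqrt a + sqrt b)^2)"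
    unfolding P_def
    by (simp add: sesq_add_matrix sesq_scaleR_matrix sesq_outer cinner_max_entangled_tensor
        cinner_tensor_max_entangled uv vu power2_eq_square)
  also have "(sqrt a + sqrt b)^2 = a + b + 2 * sqrt (a * b)"
    using \<open>0 \<le> a\<close> \<open>0 \<le> b\<close> by (simp add: power2_eq_square algebra_simps real_sqrt_mult)
  finally have "Re (trace (P ** C_symm p)) = 2 powr p * min_cost s t"
    unfolding coupling_cost_eq[OF tr] min_cost_eq_overlaps a_def[symmetric] b_def[symmetric]
    by simp
  moreover have "P \<in> couplings (diag_state u v s) (diag_state u v t)"
    unfolding couplings_def is_state_def using psd tr marg_dual marg_H by simp
  ultimately show ?thesis using that by blast
qed

lemma D_symm_diag_state:
  assumes onb: "orthonormal_basis2 u v" and s: "\<bar>s\<bar> \<le> 1" and t: "\<bar>t\<bar> \<le> 1" and "p \<noteq> 0"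
  shows "D_symm p (diag_state u v s) (diag_state u v t) powr p = 2 powr p * min_cost s t"
proof -
  let ?costs = "{Re (trace (P ** C_symm p)) | P. P \<in> couplings (diag_state u v s) (diag_state u v t)}"
  obtain P where "P \<in> couplings (diag_state u v s) (diag_state u v t)"
    and "Re (trace (P ** C_symm p)) = 2 powr p * min_cost s t"
    using min_cost_attained[OF onb s t] .
  then have "2 powr p * min_cost s t \<in> ?costs" by force
  then have "Inf ?costs = 2 powr p * min_cost s t"
    by (rule cInf_eq_minimum) (auto intro: coupling_cost_lower_bound[OF onb])
  then show ?thesis
    using \<open>p \<noteq> 0\<close> min_cost_nonneg[OF s t] by (simp add: D_symm_def powr_powr)
qed

definition pauli :: "real^3 \<Rightarrow> complex^2^2" where
  "pauli n = (n$1) *\<^sub>R sigma1 + (n$2) *\<^sub>R sigma2 + (n$3) *\<^sub>R sigma3"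

lemma pauli_eigenbasis_exists:
  assumes "norm n = 1"
  obtains u v where "orthonormal_basis2 u v" and "outer u u - outer v v = pauli n"
proof -
  have unit: "(n$1)^2 + (n$2)^2 + (n$3)^2 = 1"
    using assms by (simp add: norm_eq_1 inner_vec_def sum_3 power2_eq_square)
  have pauli: "pauli n = (\<chi> i j. if i = 1 \<and> j = 1 then of_real (n$3)
      else if i = 1 then Complex (n$1) (- n$2) else if j = 1 then Complex (n$1) (n$2)
      else - of_real (n$3))"
    by (simp add: vec_eq_iff forall_2 pauli_def sigma1_def sigma2_def sigma3_def complex_eq_iff)
  show ?thesis
  proof (cases "n$3 = -1")
    case True
    then have "n$1 = 0" "n$2 = 0" using unit by (auto simp: power2_eq_square)
    then show ?thesis
      using True by (intro that[of "vector [0, 1]" "vector [1, 0]"])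
        (auto simp: orthonormal_basis2_def cinner_def outer_def mat_def sum_2 vec_eq_iff forall_2 pauli
            complex_eq_iff)
  next
    case False
    define c where "c = 1 + n$3"
    define z where "z = Complex (n$1) (n$2)"
    have "(n$3)^2 \<le> 1" using unit zero_le_power2[of "n$1"] zero_le_power2[of "n$2"] by linarith
    then have "c > 0" using False unfolding c_def by (auto simp: abs_square_le_1 abs_le_iff)
    define k where "k = 1 / sqrt (2 * c)"
    have k: "of_real k * of_real k * (2 * of_real c) = (1::complex)"
      using \<open>c > 0\<close> unfolding k_def of_real_mult[symmetric] by (simp add: field_simps)
    have z: "z * cnj z = of_real (c * (2 - c))"
      using unit unfolding z_def c_def by (simp add: complex_eq_iff power2_eq_square algebra_simps)
    have coords: "of_real (n$3) = of_real c - (1::complex)" "Complex (n$1) (n$2) = z"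
      "Complex (n$1) (- n$2) = cnj z"
      unfolding c_def z_def by (simp_all add: complex_eq_iff)
    \<comment> \<open>the standard eigenvectors of n.sigma, which degenerate at n = (0, 0, -1)\<close>
    define u :: "complex^2" where "u = vector [of_real (k * c), of_real k * z]"
    define v :: "complex^2" where "v = vector [- of_real k * cnj z, of_real (k * c)]"
    show ?thesis
    proof (rule that)
      show "orthonormal_basis2 u v"
        unfolding orthonormal_basis2_def u_def v_def using k z
        by (simp add: cinner_def outer_def mat_def sum_2 vec_eq_iff forall_2) algebra+
      show "outer u u - outer v v = pauli n"
        unfolding pauli coords u_def v_def using k z
        by (simp add: outer_def vec_eq_iff forall_2) algebra+
    qed
  qed
qed

lemma bloch_state_eq_diag_state:
  assumes "orthonormal_basis2 u v" and "outer u u - outer v v = pauli n"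
  shows "bloch_state (s *\<^sub>R n) = diag_state u v s"
proof -
  have "bloch_state (s *\<^sub>R n) = (1 / 2) *\<^sub>R (mat 1 + s *\<^sub>R pauli n)"
    by (simp add: bloch_state_def pauli_def scaleR_add_right add.assoc)
  also have "\<dots> = (1 / 2) *\<^sub>R ((outer u u + outer v v) + s *\<^sub>R (outer u u - outer v v))"
    using assms by (simp add: orthonormal_basis2_def)
  also have "\<dots> = diag_state u v s"
    by (simp add: diag_state_def add_divide_distrib diff_divide_distrib scaleR_add_left
        scaleR_diff_left scaleR_add_right scaleR_diff_right algebra_simps)
  finally show ?thesis .
qed

lemma min_cost_closed_form:
  fixes s t :: real
  defines "m \<equiv> max \<bar>s\<bar> \<bar>t\<bar>"
  shows "min_cost s t = 1 + \<bar>s - t\<bar> / 2 - sqrt ((1 + (if m = 0 then 0 else s * t / m)) * (1 - m))"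
proof -
  have "(1 + min s t) * (1 - max s t) = (1 + (if m = 0 then 0 else s * t / m)) * (1 - m)"
    unfolding m_def by (cases "s \<le> 0"; cases "t \<le> 0"; cases "\<bar>s\<bar> \<le> \<bar>t\<bar>")
      (auto simp: max_def min_def field_simps)
  then show ?thesis unfolding min_cost_def by simp
qed

lemma dependent_pair_on_line:
  fixes r1 r2 :: "'a::euclidean_space"
  assumes "(a, b) \<noteq> (0, 0)" and "a *\<^sub>R r1 + b *\<^sub>R r2 = 0"
  obtains n s t where "norm n = 1" and "r1 = s *\<^sub>R n" and "r2 = t *\<^sub>R n"
proof (cases "r1 = 0")
  case True
  show ?thesis
  proof (cases "r2 = 0")
    case True
    obtain e :: 'a where "e \<in> Basis" using nonempty_Basis by blast
    then show ?thesis using \<open>r1 = 0\<close> True by (intro that[of e 0 0]) auto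
  next
    case False
    then show ?thesis using \<open>r1 = 0\<close> by (intro that[of "r2 /\<^sub>R norm r2" 0 "norm r2"]) auto
  qed
next
  case False
  have "b \<noteq> 0" using assms False by auto
  have "r2 = (1 / b) *\<^sub>R (b *\<^sub>R r2)" using \<open>b \<noteq> 0\<close> by simp
  also have "b *\<^sub>R r2 = - (a *\<^sub>R r1)" using assms(2) by (simp add: eq_neg_iff_add_eq_0 add.commute)
  finally have "r2 = (- a / b) *\<^sub>R r1" by simp
  then show ?thesis
    using False by (intro that[of "r1 /\<^sub>R norm r1" "norm r1" "- a / b * norm r1"]) auto
qed

theorem theorem3p2:
  fixes r1 r2 :: "real^3" and p :: real
  assumes "norm r1 \<le> 1" and "norm r2 \<le> 1"
    and "\<exists>a b. (a, b) \<noteq> (0, 0) \<and> a *\<^sub>R r1 + b *\<^sub>R r2 = 0"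
    and "p \<ge> 1"
  shows "(let m = max (norm r1) (norm r2) in
          D_symm p (bloch_state r1) (bloch_state r2) powr p =
          2 powr p * (1 + norm (r1 - r2) / 2
             - sqrt ((1 + (if m = 0 then 0 else inner r1 r2 / m)) * (1 - m))))"
proof -
  obtain a b where "(a, b) \<noteq> (0, 0)" and "a *\<^sub>R r1 + b *\<^sub>R r2 = 0"
    using assms(3) by blast
  then obtain n s t where n: "norm n = 1" and r: "r1 = s *\<^sub>R n" "r2 = t *\<^sub>R n"
    by (rule dependent_pair_on_line)
  obtain u v where onb: "orthonormal_basis2 u v" and eig: "outer u u - outer v v = pauli n"
    using pauli_eigenbasis_exists[OF n] .
  have "norm r1 = \<bar>s\<bar>" "norm r2 = \<bar>t\<bar>" "norm (r1 - r2) = \<bar>s - t\<bar>" "inner r1 r2 = s * t"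
    using n unfolding r by (simp_all add: scaleR_diff_left[symmetric] dot_square_norm power2_eq_square)
  moreover have "D_symm p (bloch_state r1) (bloch_state r2) powr p = 2 powr p * min_cost s t"
    unfolding r bloch_state_eq_diag_state[OF onb eig]
    using D_symm_diag_state[OF onb] assms(1,2,4) \<open>norm r1 = \<bar>s\<bar>\<close> \<open>norm r2 = \<bar>t\<bar>\<close> by simp
  ultimately show ?thesis
    unfolding Let_def min_cost_closed_form by simp
qed

end
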